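(* Let $0<\gamma<\frac n2$ and $1\leq k<\frac n2-\gamma$, let $a_0=\frac{n-k-2}{2}$, and define $$\Theta(a,b)=4^\gamma\frac{\Gamma\big(\frac{1+\gamma}{2}+\frac{a+bi}{2}\big)}{\Gamma\big(\frac{1-\gamma}{2}+\frac{a+bi}{2}\big)}\,\frac{\Gamma\big(\frac{1+\gamma}{2}+\frac{a-bi}{2}\big)}{\Gamma\big(\frac{1-\gamma}{2}+\frac{a-bi}{2}\big)}.$$ Then: (i) $\frac{\partial\Theta}{\partial a}(a,\beta i)>0$ for all $a\geq a_0$ and $0<\beta\leq\frac k2$; (ii) $\frac{\partial\Theta}{\partial\beta}(a,\beta i)<0$ for all $a\geq a_0$ and $0<\beta\leq\frac k2$; (iii) $\frac{\partial\Theta}{\partial b}(a,b)>0$ for all $a\geq a_0$ and real $b>0$.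
   Context: For $a\geq a_0$ and $b$ either purely imaginary with $|b|\leq\frac k2$ or real, $\Theta(a,b)$ is a positive real number. *)

theory Defs
  imports "HOL-Analysis.Analysis"
begin

definition Theta :: "real \<Rightarrow> real \<Rightarrow> complex \<Rightarrow> complex" where
  "Theta \<gamma> a b =
     of_real (4 powr \<gamma>) *
     (Gamma ((1 + \<gamma>) / 2 + (of_real a + b * \<i>) / 2) / Gamma ((1 - \<gamma>) / 2 + (of_real a + b * \<i>) / 2)) *
     (Gamma ((1 + \<gamma>) / 2 + (of_real a - b * \<i>) / 2) / Gamma ((1 - \<gamma>) / 2 + (of_real a - b * \<i>) / 2))"

end

theory Submission
  imports Defs
begin

text \<open>
  With \<open>R(z) = \<Gamma>(z + \<gamma>) / \<Gamma>(z)\<close> and \<open>w = (1 - \<gamma>)/2 + (a + b i)/2\<close> one has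
  \<open>\<Theta>(a, b) = 4\<^sup>\<gamma> R(w) R(w')\<close>, where \<open>w'\<close> is \<open>w\<close> with \<open>b\<close> replaced by \<open>-b\<close>.
  The logarithmic derivative of \<open>R\<close> is
  \<open>\<psi>\<^sub>\<gamma>(z) = \<psi>(z + \<gamma>) - \<psi>(z) = \<Sum>\<^sub>k (1/(z + k) - 1/(z + \<gamma> + k))\<close>.
  On the positive reals \<open>\<psi>\<^sub>\<gamma>\<close> is positive and, termwise, strictly decreasing; for \<open>b = \<beta> i\<close>
  both \<open>w\<close> and \<open>w'\<close> are the positive reals \<open>(1 - \<gamma>)/2 + (a \<mp> \<beta>)/2\<close>, which gives (i) and (ii).
  For real \<open>b\<close>, \<open>w' = cnj w\<close>, so \<open>\<partial>\<^sub>b\<Theta> = 4\<^sup>\<gamma> |R(w)|\<^sup>2 (Im \<psi>\<^sub>\<gamma>(cnj w) - Im \<psi>\<^sub>\<gamma>(w))/2\<close>,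
  and termwise \<open>Im \<psi>\<^sub>\<gamma>(z)\<close> has the sign opposite to \<open>Im z\<close> when \<open>Re z > 0\<close>.
\<close>

lemma Digamma_shift_diff_sums:
  fixes z g :: "'a::{real_normed_field,banach}"
  assumes "z \<noteq> 0" "z + g \<noteq> 0"
  shows "(\<lambda>k. inverse (z + of_nat k) - inverse (z + g + of_nat k)) sums (Digamma (z + g) - Digamma z)"
proof -
  have "(\<lambda>k. inverse (of_nat (Suc k)) - inverse (w + of_nat k)) sums (Digamma w + euler_mascheroni)"
    if "w \<noteq> 0" for w :: 'a
    using summable_Digamma[OF that] by (simp add: Digamma_def summable_sums)
  from sums_diff[OF this[OF assms(2)] this[OF assms(1)]] show ?thesis
    by simp
qed

lemma sums_pos_strict:
  fixes f :: "nat \<Rightarrow> 'a::{ordered_comm_monoid_add,linorder_topology}"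
  assumes "f sums s" "\<And>k. 0 < f k"
  shows "0 < s"
  using suminf_pos[OF sums_summable[OF assms(1)] assms(2)] sums_unique[OF assms(1)] by simp

lemma Digamma_shift_diff_strict_antimono:
  fixes u v g :: real
  assumes "0 < u" "u < v" "0 < g"
  shows "Digamma (v + g) - Digamma v < Digamma (u + g) - Digamma u"
proof -
  have gap: "inverse r - inverse (r + g) = g / (r * (r + g))" if "0 < r" for r
    using that assms(3) by (simp add: field_simps)
  have "0 < (inverse (u + real k) - inverse (u + g + real k))
            - (inverse (v + real k) - inverse (v + g + real k))" for k
  proof -
    have "(u + real k) * (u + real k + g) < (v + real k) * (v + real k + g)"
      using assms by (intro mult_strict_mono) auto
    then have "g / ((v + real k) * (v + real k + g)) < g / ((u + real k) * (u + real k + g))"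
      using assms by (intro divide_strict_left_mono) auto
    with assms show ?thesis
      using gap[of "u + real k"] gap[of "v + real k"] by (simp add: add_ac)
  qed
  moreover have "(\<lambda>k. (inverse (u + of_nat k) - inverse (u + g + of_nat k))
                      - (inverse (v + of_nat k) - inverse (v + g + of_nat k)))
                 sums ((Digamma (u + g) - Digamma u) - (Digamma (v + g) - Digamma v))"
    using assms by (intro sums_diff Digamma_shift_diff_sums) auto
  ultimately show ?thesis
    using sums_pos_strict by fastforce
qed

lemma Im_Digamma_shift_diff_sign:
  fixes z :: complex and g :: real
  assumes "0 < Re z" "0 < g" "Im z \<noteq> 0"
  shows "Im z * Im (Digamma (z + of_real g) - Digamma z) < 0"
proof -
  define Y where "Y = Im z"
  have Im_inverse_shift: "Im (inverse (w + of_nat k)) = - Y / ((Re w + real k)\<^sup>2 + Y\<^sup>2)"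
    if "Im w = Y" for w k
    using that by simp
  have "0 < - (Y * Im (inverse (z + of_nat k) - inverse (z + of_real g + of_nat k)))" for k
  proof -
    have "(Re z + real k)\<^sup>2 + Y\<^sup>2 < (Re z + g + real k)\<^sup>2 + Y\<^sup>2"
      using assms by (intro add_strict_right_mono power_strict_mono) auto
    then have "Y\<^sup>2 / ((Re z + g + real k)\<^sup>2 + Y\<^sup>2) < Y\<^sup>2 / ((Re z + real k)\<^sup>2 + Y\<^sup>2)"
      using assms by (intro divide_strict_left_mono) (auto simp: Y_def add_pos_nonneg)
    then show ?thesis
      by (simp add: Y_def Im_inverse_shift power2_eq_square algebra_simps)
  qed
  moreover have "(\<lambda>k. - (Y * Im (inverse (z + of_nat k) - inverse (z + of_real g + of_nat k))))
                 sums (- (Y * Im (Digamma (z + of_real g) - Digamma z)))"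
    using assms by (intro sums_minus sums_mult sums_Im Digamma_shift_diff_sums) (auto simp: complex_eq_iff)
  ultimately show ?thesis
    using sums_pos_strict Y_def by fastforce
qed

lemma pos_notin_nonpos_Ints: "0 < (x :: 'a :: linordered_idom) \<Longrightarrow> x \<notin> \<int>\<^sub>\<le>\<^sub>0"
  by auto

lemma Re_pos_notin_nonpos_Ints: "0 < Re z \<Longrightarrow> z \<notin> \<int>\<^sub>\<le>\<^sub>0"
  by (auto elim!: nonpos_Ints_cases)

definition Gamma_ratio :: "'a::Gamma \<Rightarrow> 'a \<Rightarrow> 'a" where
  "Gamma_ratio g z = Gamma (z + g) / Gamma z"

lemma has_field_derivative_Gamma_ratio [derivative_intros]:
  fixes g :: "'a::Gamma"
  assumes "(f has_field_derivative f') (at x within S)" "f x \<notin> \<int>\<^sub>\<le>\<^sub>0" "f x + g \<notin> \<int>\<^sub>\<le>\<^sub>0"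
  shows "((\<lambda>x. Gamma_ratio g (f x)) has_field_derivative
           Gamma_ratio g (f x) * (Digamma (f x + g) - Digamma (f x)) * f') (at x within S)"
  unfolding Gamma_ratio_def using assms Gamma_nonzero[OF assms(2)]
  by (auto intro!: derivative_eq_intros simp: field_simps)

lemma Gamma_ratio_pos:
  fixes t g :: real
  shows "0 < t \<Longrightarrow> 0 \<le> g \<Longrightarrow> 0 < Gamma_ratio g t"
  by (simp add: Gamma_ratio_def)

lemma Gamma_ratio_complex_of_real:
  "Gamma_ratio (complex_of_real g) (complex_of_real t) = complex_of_real (Gamma_ratio g t)"
  by (simp add: Gamma_ratio_def Gamma_complex_of_real flip: of_real_add)

lemma cnj_Gamma_ratio: "cnj (Gamma_ratio g z) = Gamma_ratio (cnj g) (cnj z)"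
  by (simp add: Gamma_ratio_def cnj_Gamma)

lemma Theta_eq_Gamma_ratio:
  "Theta \<gamma> a b = of_real (4 powr \<gamma>)
     * Gamma_ratio (of_real \<gamma>) ((1 - of_real \<gamma>) / 2 + (of_real a + b * \<i>) / 2)
     * Gamma_ratio (of_real \<gamma>) ((1 - of_real \<gamma>) / 2 + (of_real a - b * \<i>) / 2)"
  unfolding Theta_def Gamma_ratio_def by (simp add: field_simps)

lemma Theta_imag:
  "Theta \<gamma> a (of_real \<beta> * \<i>) = of_real (4 powr \<gamma>
     * Gamma_ratio \<gamma> ((1 - \<gamma>) / 2 + (a - \<beta>) / 2) * Gamma_ratio \<gamma> ((1 - \<gamma>) / 2 + (a + \<beta>) / 2))"
proof -
  have args: "(1 - of_real \<gamma>) / 2 + (of_real a + of_real \<beta> * \<i> * \<i>) / 2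
          = complex_of_real ((1 - \<gamma>) / 2 + (a - \<beta>) / 2)"
       "(1 - of_real \<gamma>) / 2 + (of_real a - of_real \<beta> * \<i> * \<i>) / 2
          = complex_of_real ((1 - \<gamma>) / 2 + (a + \<beta>) / 2)"
    by (simp_all add: complex_eq_iff)
  then show ?thesis
    by (simp only: Theta_eq_Gamma_ratio args Gamma_ratio_complex_of_real of_real_mult)
qed

lemma Theta_imag_derivative_signs:
  fixes \<gamma> a \<beta> :: real
  assumes "0 < \<gamma>" "0 < \<beta>" "0 < (1 - \<gamma>) / 2 + (a - \<beta>) / 2"
  shows "\<exists>D. ((\<lambda>x. Re (Theta \<gamma> x (of_real \<beta> * \<i>))) has_real_derivative D) (at a) \<and> D > 0"
    and "\<exists>D. ((\<lambda>y. Re (Theta \<gamma> a (of_real y * \<i>))) has_real_derivative D) (at \<beta>) \<and> D < 0"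
proof -
  define p where "p = (1 - \<gamma>) / 2 + (a - \<beta>) / 2"
  define q where "q = (1 - \<gamma>) / 2 + (a + \<beta>) / 2"
  define \<psi> where "\<psi> t = Digamma (t + \<gamma>) - Digamma t" for t
  define \<Theta> where "\<Theta> = 4 powr \<gamma> * Gamma_ratio \<gamma> p * Gamma_ratio \<gamma> q"
  have pq: "0 < p" "p < q"
    using assms by (simp_all add: p_def q_def)
  have Re_Theta: "Re (Theta \<gamma> x (of_real y * \<i>)) =
      4 powr \<gamma> * Gamma_ratio \<gamma> ((1 - \<gamma>) / 2 + (x - y) / 2) * Gamma_ratio \<gamma> ((1 - \<gamma>) / 2 + (x + y) / 2)"
    for x y
    by (simp add: Theta_imag)
  have "((\<lambda>x. Re (Theta \<gamma> x (of_real \<beta> * \<i>))) has_real_derivative \<Theta> * (\<psi> p + \<psi> q) / 2) (at a)"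
    unfolding Re_Theta using pq assms(1)
    by (auto intro!: derivative_eq_intros pos_notin_nonpos_Ints simp: \<Theta>_def \<psi>_def p_def q_def field_simps)
  moreover have "((\<lambda>y. Re (Theta \<gamma> a (of_real y * \<i>))) has_real_derivative \<Theta> * (\<psi> q - \<psi> p) / 2) (at \<beta>)"
    unfolding Re_Theta using pq assms(1)
    by (auto intro!: derivative_eq_intros pos_notin_nonpos_Ints simp: \<Theta>_def \<psi>_def p_def q_def field_simps)
  moreover have "0 < \<Theta>"
    using pq assms(1) by (simp add: \<Theta>_def Gamma_ratio_pos)
  moreover have "0 < \<psi> p" "0 < \<psi> q" "\<psi> q < \<psi> p"
    using pq assms(1) by (simp_all add: \<psi>_def Digamma_real_strict_mono Digamma_shift_diff_strict_antimono)
  ultimately show "\<exists>D. ((\<lambda>x. Re (Theta \<gamma> x (of_real \<beta> * \<i>))) has_real_derivative D) (at a) \<and> D > 0"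
    and "\<exists>D. ((\<lambda>y. Re (Theta \<gamma> a (of_real y * \<i>))) has_real_derivative D) (at \<beta>) \<and> D < 0"
    by (auto intro!: exI mult_pos_pos mult_pos_neg)
qed

lemma Theta_real_derivative_pos:
  fixes \<gamma> a b :: real
  assumes "0 < \<gamma>" "0 < b" "0 < (1 - \<gamma>) / 2 + a / 2"
  shows "\<exists>D. ((\<lambda>y. Re (Theta \<gamma> a (of_real y))) has_real_derivative D) (at b) \<and> D > 0"
proof -
  define w :: complex where "w = (1 - of_real \<gamma>) / 2 + (of_real a + of_real b * \<i>) / 2"
  define \<psi> where "\<psi> z = Digamma (z + of_real \<gamma>) - Digamma z" for z :: complex
  define R where "R = Gamma_ratio (of_real \<gamma>) w"
  have w: "Re w = (1 - \<gamma>) / 2 + a / 2" "Im w = b / 2"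
    "cnj w = (1 - of_real \<gamma>) / 2 + (of_real a - of_real b * \<i>) / 2"
    by (simp_all add: w_def complex_eq_iff field_simps)
  \<comment> \<open>Centring at \<open>b\<close> makes the two arguments evaluate to \<open>w\<close> and \<open>cnj w\<close> at \<open>z = b\<close>.\<close>
  have "(1 - of_real \<gamma>) / 2 + (of_real a + z * \<i>) / 2 = w + (z - of_real b) * (\<i> / 2)"
       "(1 - of_real \<gamma>) / 2 + (of_real a - z * \<i>) / 2 = cnj w - (z - of_real b) * (\<i> / 2)" for z
    by (simp_all add: w_def complex_eq_iff field_simps)
  then have Theta_fun: "Theta \<gamma> a = (\<lambda>z. of_real (4 powr \<gamma>)
     * Gamma_ratio (of_real \<gamma>) (w + (z - of_real b) * (\<i> / 2))
     * Gamma_ratio (of_real \<gamma>) (cnj w - (z - of_real b) * (\<i> / 2)))"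
    by (simp add: fun_eq_iff Theta_eq_Gamma_ratio)
  have "(Theta \<gamma> a has_field_derivative
          of_real (4 powr \<gamma>) * R * cnj R * ((\<psi> w - \<psi> (cnj w)) * (\<i> / 2))) (at (of_real b))"
    unfolding Theta_fun using assms w
    by (auto intro!: derivative_eq_intros Re_pos_notin_nonpos_Ints simp: R_def \<psi>_def cnj_Gamma_ratio algebra_simps)
  then have "((\<lambda>y. Re (Theta \<gamma> a (of_real y))) has_real_derivative
           Re (of_real (4 powr \<gamma>) * R * cnj R * ((\<psi> w - \<psi> (cnj w)) * (\<i> / 2)))) (at b)"
    by (intro has_field_derivative_Re has_vector_derivative_real_field)
  moreover have "Re (of_real (4 powr \<gamma>) * R * cnj R * ((\<psi> w - \<psi> (cnj w)) * (\<i> / 2)))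
      = 4 powr \<gamma> * (cmod R)\<^sup>2 * (Im (\<psi> (cnj w)) - Im (\<psi> w)) / 2"
    by (simp add: mult.assoc complex_norm_square[symmetric])
  moreover have "Im (\<psi> w) < 0" "0 < Im (\<psi> (cnj w))"
    using Im_Digamma_shift_diff_sign[of w \<gamma>] Im_Digamma_shift_diff_sign[of "cnj w" \<gamma>] assms w(1,2)
    by (simp_all add: \<psi>_def mult_less_0_iff zero_less_mult_iff)
  moreover have "R \<noteq> 0"
    using assms w by (simp add: R_def Gamma_ratio_def Gamma_nonzero Re_pos_notin_nonpos_Ints)
  ultimately show ?thesis
    by (auto intro!: exI)
qed

theorem lemma3p7:
  fixes n k :: nat and \<gamma> :: real
  assumes "0 < \<gamma>" and "\<gamma> < real n / 2"
    and "1 \<le> k" and "real k < real n / 2 - \<gamma>"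
  defines "a\<^sub>0 \<equiv> (real n - real k - 2) / 2"
  shows "(\<forall>a \<beta>. a \<ge> a\<^sub>0 \<and> 0 < \<beta> \<and> \<beta> \<le> real k / 2 \<longrightarrow>
            (\<exists>D. ((\<lambda>x. Re (Theta \<gamma> x (of_real \<beta> * \<i>))) has_real_derivative D) (at a) \<and> D > 0))
       \<and> (\<forall>a \<beta>. a \<ge> a\<^sub>0 \<and> 0 < \<beta> \<and> \<beta> \<le> real k / 2 \<longrightarrow>
            (\<exists>D. ((\<lambda>y. Re (Theta \<gamma> a (of_real y * \<i>))) has_real_derivative D) (at \<beta>) \<and> D < 0))
       \<and> (\<forall>a b. a \<ge> a\<^sub>0 \<and> 0 < b \<longrightarrow>
            (\<exists>D. ((\<lambda>y. Re (Theta \<gamma> a (of_real y))) has_real_derivative D) (at b) \<and> D > 0))"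
proof -
  have lower: "0 < (1 - \<gamma>) / 2 + (a - \<beta>) / 2" if "a\<^sub>0 \<le> a" "\<beta> \<le> real k / 2" for a \<beta>
    using that assms(4) by (simp add: a\<^sub>0_def field_simps)
  have lower_real: "0 < (1 - \<gamma>) / 2 + a / 2" if "a\<^sub>0 \<le> a" for a
    using lower[OF that, of 0] by simp
  show ?thesis
    by (intro conjI allI impI; elim conjE)
      (assumption | rule Theta_imag_derivative_signs Theta_real_derivative_pos assms(1) lower lower_real)+
qed

end
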